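(* For all sufficiently large $\alpha$, every error-free uncertain priors coding scheme $(E,D)$ (possibly using the shared random string) has, for some pair $(P,Q)\in\mathcal{F}_\alpha$, expected codeword length $\mathbb{E}_{x\sim P,R}[|E(x,\alpha,R,P)|]\geq 2\log k-2\log\log k$, where $k$ is as in the definition of $\mathcal{F}_\alpha$.
   Context: All logarithms are base 2. For $\alpha\geq1$, $P,Q\in\Delta(M)$ are $\alpha$-close if $\frac{1}{\alpha}Q(x)\leq P(x)\leq\alpha Q(x)$ for all $x\in M$. An error-free uncertain priors coding scheme is a pair $E:M\times\mathbb{N}\times\{0,1\}^{\mathbb{N}}\times\Delta(M)\to\{0,1\}^*$, $D:\{0,1\}^*\times\mathbb{N}\times\{0,1\}^{\mathbb{N}}\times\Delta(M)\to M$ such that for every $x\in M$, $\alpha\in\mathbb{N}$, $R\in\{0,1\}^{\mathbb{N}}$, $P\in\Delta(M)$ and every $Q$ $\alpha$-close to $P$, $D(E(x,\alpha,R,P),\alpha,R,Q)=x$; $R$ is uniformly random in expectations. The family $\mathcal{F}_\alpha$: let $k$ be the largest integer with $k\sqrt{\log k}\leq\alpha$, and let $M$ be a message set of size $k^2+1$. For each $m\in M$ and $S\subseteq M$ with $|S|=k+1$, $m\in S$, define $P_{m,S}(m)=1-1/\log k$, $P_{m,S}(x)=1/(k^2\log k)$ for $x\neq m$; $Q_S(x)=1/(k\sqrt{\log k})$ for $x\in S$ and $Q_S(x)=\frac{1}{k^2-k}\left(1-\frac{k+1}{k\sqrt{\log k}}\right)$ for $x\notin S$. $\mathcal{F}_\alpha$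 is the set of all pairs $(P_{m,S},Q_S)$; for sufficiently large $\alpha$ each such pair is $\alpha$-close. *)

theory Defs
  imports "HOL-Probability.Probability"
begin

definition coins :: "(nat \<Rightarrow> bool) measure" where
  "coins = PiM UNIV (\<lambda>_. measure_pmf (pmf_of_set (UNIV :: bool set)))"

definition distr_on :: "'a set \<Rightarrow> ('a \<Rightarrow> real) set" where
  "distr_on M = {P. (\<forall>x\<in>M. 0 \<le> P x) \<and> (\<forall>x. x \<notin> M \<longrightarrow> P x = 0) \<and> sum P M = 1}"

definition alpha_close :: "'a set \<Rightarrow> real \<Rightarrow> ('a \<Rightarrow> real) \<Rightarrow> ('a \<Rightarrow> real) \<Rightarrow> bool" where
  "alpha_close M \<alpha> P Q \<longleftrightarrow> (\<forall>x\<in>M. Q x / \<alpha> \<le> P x \<and> P x \<le> \<alpha> * Q x)"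

definition error_free_scheme ::
  "'a set \<Rightarrow> ('a \<Rightarrow> nat \<Rightarrow> (nat \<Rightarrow> bool) \<Rightarrow> ('a \<Rightarrow> real) \<Rightarrow> bool list)
          \<Rightarrow> (bool list \<Rightarrow> nat \<Rightarrow> (nat \<Rightarrow> bool) \<Rightarrow> ('a \<Rightarrow> real) \<Rightarrow> 'a) \<Rightarrow> bool" where
  "error_free_scheme M E D \<longleftrightarrow>
     (\<forall>x\<in>M. \<forall>\<alpha>::nat. \<forall>R. \<forall>P\<in>distr_on M. \<forall>Q\<in>distr_on M.
        alpha_close M (real \<alpha>) P Q \<longrightarrow> D (E x \<alpha> R P) \<alpha> R Q = x)"

definition kof :: "nat \<Rightarrow> nat" where
  "kof \<alpha> = (GREATEST k::nat. real k * sqrt (log 2 (real k)) \<le> real \<alpha>)"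

definition P_mS :: "'a set \<Rightarrow> nat \<Rightarrow> 'a \<Rightarrow> 'a \<Rightarrow> real" where
  "P_mS M k m x =
     (if x \<notin> M then 0
      else if x = m then 1 - 1 / log 2 (real k)
      else 1 / ((real k)\<^sup>2 * log 2 (real k)))"

definition Q_S :: "'a set \<Rightarrow> nat \<Rightarrow> 'a set \<Rightarrow> 'a \<Rightarrow> real" where
  "Q_S M k S x =
     (if x \<notin> M then 0
      else if x \<in> S then 1 / (real k * sqrt (log 2 (real k)))
      else (1 / ((real k)\<^sup>2 - real k)) * (1 - (real k + 1) / (real k * sqrt (log 2 (real k)))))"

definition family :: "'a set \<Rightarrow> nat \<Rightarrow> (('a \<Rightarrow> real) \<times> ('a \<Rightarrow> real)) set" where
  "family M \<alpha> = {(P_mS M (kof \<alpha>) m, Q_S M (kof \<alpha>) S) | m S.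
                    m \<in> M \<and> S \<subseteq> M \<and> card S = kof \<alpha> + 1 \<and> m \<in> S}"

definition exp_len ::
  "'a set \<Rightarrow> ('a \<Rightarrow> nat \<Rightarrow> (nat \<Rightarrow> bool) \<Rightarrow> ('a \<Rightarrow> real) \<Rightarrow> bool list)
     \<Rightarrow> nat \<Rightarrow> ('a \<Rightarrow> real) \<Rightarrow> ennreal" where
  "exp_len M E \<alpha> P = (\<Sum>x\<in>M. ennreal (P x) * (\<integral>\<^sup>+ R. ennreal (real (length (E x \<alpha> R P))) \<partial>coins))"

end

theory Submission
  imports Defs
begin

text \<open>Any two messages x, y lie in a common (k+1)-set S, and both P_x and P_y are
  \<alpha>-close to Q_S; a decoder holding Q_S recovers both, so for every fixed random string the
  codewords of the k^2+1 messages, each encoded under its own prior, are pairwise distinct.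
  Distinct bit strings need total length about 2 log k per message, so some message m has
  expected codeword length at least 2 log k - 3, and P_m gives m probability 1 - 1/log k.\<close>

lemma card_bool_lists_length_le_less: "card {xs :: bool list. length xs \<le> t} < 2 ^ (t + 1)"
proof -
  have "card {xs :: bool list. length xs \<le> t} = (\<Sum>i\<le>t. 2 ^ i)"
    using card_lists_length_le[of "UNIV :: bool set" t] by simp
  also have "\<dots> < 2 ^ (t + 1)"
    by (induction t) auto
  finally show ?thesis .
qed

lemma card_short_codewords_less:
  fixes g :: "'a \<Rightarrow> bool list"
  assumes "inj_on g M"
  shows "card {x\<in>M. length (g x) \<le> t} < 2 ^ (t + 1)"
proof -
  have "card {x\<in>M. length (g x) \<le> t} = card (g ` {x\<in>M. length (g x) \<le> t})"
    using assms by (auto intro: card_image[symmetric] inj_on_subset)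
  also have "\<dots> \<le> card {xs :: bool list. length xs \<le> t}"
    using finite_lists_length_le[of "UNIV :: bool set" t] by (intro card_mono) auto
  finally show ?thesis
    using card_bool_lists_length_le_less[of t] by linarith
qed

text \<open>Layer-cake counting: a codeword of length n is counted once in each layer t < n, and
  at most 2^(t+1) codewords are missing from layer t.\<close>
lemma sum_length_inj_on_ge:
  fixes g :: "'a \<Rightarrow> bool list"
  assumes "finite M" and "inj_on g M"
  shows "T * card M \<le> (\<Sum>x\<in>M. length (g x)) + 2 ^ (T + 1)"
proof -
  have layer: "card M \<le> card {x\<in>M. t < length (g x)} + 2 ^ (t + 1)" for t
  proof -
    have "card M = card {x\<in>M. t < length (g x)} + card {x\<in>M. length (g x) \<le> t}"
      using assms(1) by (subst card_Un_disjoint[symmetric]) (auto intro: arg_cong[where f = card])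
    then show ?thesis
      using card_short_codewords_less[OF assms(2), of t] by linarith
  qed
  have "T * card M \<le> (\<Sum>t<T. card {x\<in>M. t < length (g x)} + 2 ^ (t + 1))"
    using sum_mono[OF layer, of "{..<T}"] by simp
  also have "\<dots> = (\<Sum>t<T. card {x\<in>M. t < length (g x)}) + (\<Sum>t<T. 2 ^ (t + 1))"
    by (rule sum.distrib)
  also have "(\<Sum>t<T. card {x\<in>M. t < length (g x)}) = (\<Sum>x\<in>M. \<Sum>t<T. of_bool (t < length (g x)))"
  proof -
    have "card {x\<in>M. t < length (g x)} = (\<Sum>x\<in>M. of_bool (t < length (g x)))" for t
      using assms(1) by (simp add: sum.If_cases Int_def conj_commute)
    then show ?thesis
      by (simp only: sum.swap[of _ "{..<T}" M])
  qed
  also have "\<dots> \<le> (\<Sum>x\<in>M. length (g x))"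
  proof (rule sum_mono)
    fix x
    have "(\<Sum>t<T. of_bool (t < length (g x)) :: nat) = card ({..<T} \<inter> {..<length (g x)})"
      by (simp add: sum.If_cases lessThan_def)
    also have "\<dots> \<le> length (g x)"
      using card_mono[of "{..<length (g x)}" "{..<T} \<inter> {..<length (g x)}"] by simp
    finally show "(\<Sum>t<T. of_bool (t < length (g x)) :: nat) \<le> length (g x)" .
  qed
  also have "(\<Sum>t<T. 2 ^ (t + 1) :: nat) \<le> 2 ^ (T + 1)"
    by (induction T) auto
  finally show ?thesis by simp
qed

text \<open>Lower bound: Q x / a \<le> q / a \<le> q * q \<le> P x. Upper bound: either a * Q x = a * q \<ge> 1,
  or P x = q * q while a * Q x \<ge> a * q * q * q \<ge> q * q.\<close>
lemma alpha_close_by_scale: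
  fixes q a :: real
  assumes "0 \<le> q" and "1 \<le> a * q"
    and "\<And>x. x \<in> M \<Longrightarrow> q\<^sup>2 \<le> P x \<and> P x \<le> 1 \<and> Q x \<le> q"
    and "\<And>x. x \<in> M \<Longrightarrow> Q x = q \<or> (P x = q\<^sup>2 \<and> q ^ 3 \<le> Q x)"
  shows "alpha_close M a P Q"
  unfolding alpha_close_def
proof
  fix x assume x: "x \<in> M"
  have a: "a > 0"
    using assms(1,2) mult_nonpos_nonneg[of a q] by (cases "a > 0") auto
  have "1 / a \<le> q"
    using assms(2) a by (simp add: field_simps)
  have "Q x / a \<le> q * (1 / a)"
    using assms(3)[OF x] a by (simp add: divide_right_mono)
  also have "\<dots> \<le> q\<^sup>2"
    using mult_left_mono[OF \<open>1 / a \<le> q\<close> assms(1)] by (simp add: power2_eq_square)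
  finally have lower: "Q x / a \<le> P x"
    using assms(3)[OF x] by linarith
  have "P x \<le> a * Q x"
    using assms(4)[OF x]
  proof
    assume "Q x = q"
    then have "1 \<le> a * Q x"
      using assms(2) by simp
    with assms(3)[OF x] show ?thesis by linarith
  next
    assume *: "P x = q\<^sup>2 \<and> q ^ 3 \<le> Q x"
    have "q\<^sup>2 \<le> (a * q) * q\<^sup>2"
      using assms(2) by (simp add: mult_le_cancel_right1)
    also have "\<dots> \<le> a * Q x"
      using * a by (simp add: power_numeral_reduce power2_eq_square mult.assoc)
    finally show ?thesis using * by simp
  qed
  with lower show "Q x / a \<le> P x \<and> P x \<le> a * Q x" ..
qed

lemma log_sqrt_large_bounds:
  fixes k :: nat
  assumes "65536 \<le> k"
  shows "16 \<le> log 2 k" and "4 \<le> sqrt (log 2 k)" and "sqrt (log 2 k) + 1 \<le> k"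
proof -
  have "log 2 (65536::real) = 16"
    using log_nat_power[of 2 2 16] by simp
  moreover have "log 2 (65536::real) \<le> log 2 k"
    using assms by simp
  ultimately show l: "16 \<le> log 2 k" by linarith
  show s4: "4 \<le> sqrt (log 2 k)"
    by (rule real_le_rsqrt) (use l in simp)
  have "Suc (k - 1) \<le> 2 ^ (k - 1)"
    by (rule Suc_leI, rule less_exp)
  then have "k \<le> 2 ^ (k - 1)"
    using assms by simp
  then have "log 2 k \<le> real (k - 1)"
    using assms by (intro log2_of_power_le) auto
  moreover have "4 * sqrt (log 2 k) \<le> sqrt (log 2 k) * sqrt (log 2 k)"
    using s4 l by (intro mult_right_mono) auto
  moreover have "sqrt (log 2 k) * sqrt (log 2 k) = log 2 k"
    using l by simp
  ultimately show "sqrt (log 2 k) + 1 \<le> k"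
    using assms by (simp add: of_nat_diff)
qed

lemma Q_S_outside_value_bounds:
  fixes K s :: real
  defines "b \<equiv> 1 / (K\<^sup>2 - K) * (1 - (K + 1) / (K * s))"
  assumes s: "4 \<le> s" and K: "s + 1 \<le> K"
  shows "(1 / (K * s)) ^ 3 \<le> b" and "b \<le> 1 / (K * s)"
proof -
  have K0: "K > 0" and KK: "K\<^sup>2 - K > 0"
    using s K by (auto simp: power2_eq_square)
  have Ks: "16 \<le> K * s"
    using mult_mono[of 4 K 4 s] s K by auto
  have "K * 4 \<le> K * s"
    using s K0 by (intro mult_left_mono) auto
  then have "K + 1 \<le> (K * s) / 2"
    using s K by linarith
  then have half: "(K + 1) / (K * s) \<le> 1 / 2"
    using K0 s by (simp add: field_simps)
  have "b \<le> 1 / (K\<^sup>2 - K)"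
    unfolding b_def using KK K0 s by (intro mult_left_le) auto
  also have "\<dots> \<le> 1 / (K * s)"
  proof (rule divide_left_mono)
    show "K * s \<le> K\<^sup>2 - K"
      using mult_left_mono[OF K, of K] K0 by (simp add: power2_eq_square algebra_simps)
  qed (use K0 KK s in \<open>auto intro: mult_pos_pos\<close>)
  finally show "b \<le> 1 / (K * s)" .
  have "(1 / (K * s)) ^ 3 \<le> (1 / (K * s)) ^ 2"
    using Ks by (intro power_decreasing) auto
  also have "\<dots> \<le> 1 / K\<^sup>2 * (1 / 2)"
    using K0 s mult_mono[of 4 s 4 s] by (simp add: field_simps power2_eq_square)
  also have "\<dots> \<le> b"
    unfolding b_def using KK K0 half by (intro mult_mono) (auto intro: divide_left_mono)
  finally show "(1 / (K * s)) ^ 3 \<le> b" .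
qed

lemma P_mS_Q_S_distr_close:
  fixes M :: "'a set"
  assumes M: "finite M" "card M = k\<^sup>2 + 1" and S: "S \<subseteq> M" "card S = k + 1" "m \<in> S"
    and k: "65536 \<le> k" and a: "k * sqrt (log 2 k) \<le> a"
  shows "P_mS M k m \<in> distr_on M" and "Q_S M k S \<in> distr_on M"
    and "alpha_close M a (P_mS M k m) (Q_S M k S)"
proof -
  define K l s where "K = real k" and "l = log 2 k" and "s = sqrt (log 2 k)"
  define q b where "q = 1 / (K * s)" and "b = 1 / (K\<^sup>2 - K) * (1 - (K + 1) / (K * s))"
  have l: "16 \<le> l" and s: "4 \<le> s" "s + 1 \<le> K"
    using log_sqrt_large_bounds[OF k] unfolding K_def l_def s_def by auto
  have K0: "0 < K" and ls: "l = s\<^sup>2"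
    using k l unfolding K_def l_def s_def by auto
  have q: "0 \<le> q" "q \<le> 1" "q\<^sup>2 = 1 / (K\<^sup>2 * l)"
    using K0 s ls mult_mono[of 1 K 1 s] by (auto simp: q_def power_divide power_mult_distrib)
  have b: "q ^ 3 \<le> b" "b \<le> q"
    using Q_S_outside_value_bounds[OF s] unfolding q_def b_def by auto
  then have b0: "0 \<le> b"
    using zero_le_power[OF q(1), of 3] by linarith
  have P: "P_mS M k m x = (if x \<notin> M then 0 else if x = m then 1 - 1 / l else q\<^sup>2)" for x
    unfolding P_mS_def q K_def l_def by simp
  have Q: "Q_S M k S x = (if x \<notin> M then 0 else if x \<in> S then q else b)" for x
    unfolding Q_S_def q_def b_def K_def s_def by simp
  have qq: "q\<^sup>2 \<le> q"
    using mult_left_le[OF q(2,1)] by (simp add: power2_eq_square)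
  moreover have q16: "q \<le> 1 / 16"
    using s mult_mono[of 4 K 4 s] by (simp add: q_def field_simps)
  moreover have "1 / l \<le> 1 / 16"
    using l by (simp add: field_simps)
  ultimately have q2: "q\<^sup>2 \<le> 1 - 1 / l" "0 \<le> 1 - 1 / l"
    by linarith+
  have m: "m \<in> M"
    using S by auto
  show "alpha_close M a (P_mS M k m) (Q_S M k S)"
  proof (rule alpha_close_by_scale[OF q(1)])
    show "1 \<le> a * q"
      using a K0 s unfolding q_def K_def s_def by (simp add: field_simps)
  qed (use S l q(1) qq q16 q2 b in \<open>auto simp: P Q\<close>)
  have "sum (P_mS M k m) M = P_mS M k m m + (\<Sum>x\<in>M - {m}. q\<^sup>2)"
    using M m by (simp add: sum.remove P)
  also have "\<dots> = 1"
    using M m K0 l by (simp add: P q K_def)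
  finally show "P_mS M k m \<in> distr_on M"
    unfolding distr_on_def using q2 by (auto simp: P)
  have "sum (Q_S M k S) M = (\<Sum>x\<in>S. q) + (\<Sum>x\<in>M - S. b)"
    using M S by (simp add: sum.subset_diff[of S M] Q)
  also have "\<dots> = 1"
    using M S K0 s by (simp add: card_Diff_subset finite_subset of_nat_diff q_def b_def K_def power2_eq_square field_simps)
  finally show "Q_S M k S \<in> distr_on M"
    unfolding distr_on_def using q(1) b0 by (auto simp: Q)
qed

lemma kof_large:
  assumes "262144 \<le> \<alpha>"
  shows "kof \<alpha> * sqrt (log 2 (kof \<alpha>)) \<le> \<alpha>" and "65536 \<le> kof \<alpha>"
proof -
  let ?fits = "\<lambda>k::nat. k * sqrt (log 2 k) \<le> \<alpha>"
  have bounded: "k \<le> \<alpha> + 1" if "?fits k" for k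
  proof (cases "2 \<le> k")
    case True
    then have "1 \<le> sqrt (log 2 k)"
      by simp
    then have "real k \<le> k * sqrt (log 2 k)"
      by (simp add: mult_le_cancel_left1)
    with that show ?thesis by simp
  qed simp
  have "log 2 (65536::real) = 16"
    using log_nat_power[of 2 2 16] by simp
  moreover have "sqrt (16::real) = 4"
    by (simp add: real_sqrt_unique)
  ultimately have fits: "?fits 65536"
    using assms by simp
  show "?fits (kof \<alpha>)"
    unfolding kof_def by (rule GreatestI_nat[where P = ?fits, OF fits bounded])
  show "65536 \<le> kof \<alpha>"
    unfolding kof_def by (rule Greatest_le_nat[where P = ?fits, OF fits bounded])
qed

lemma error_free_codewords_distinct:
  assumes "error_free_scheme M E D" and "x \<in> M" and "y \<in> M"
    and "Px \<in> distr_on M" and "Py \<in> distr_on M" and "Q \<in> distr_on M"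
    and "alpha_close M \<alpha> Px Q" and "alpha_close M \<alpha> Py Q"
    and "E x \<alpha> R Px = E y \<alpha> R Py"
  shows "x = y"
proof -
  have "x = D (E x \<alpha> R Px) \<alpha> R Q" and "y = D (E y \<alpha> R Py) \<alpha> R Q"
    using assms unfolding error_free_scheme_def by metis+
  with assms(9) show ?thesis by simp
qed

lemma codewords_inj_on:
  fixes M :: "'a set"
  assumes M: "finite M" "card M = k\<^sup>2 + 1" and "error_free_scheme M E D"
    and k: "65536 \<le> k" and \<alpha>: "k * sqrt (log 2 k) \<le> \<alpha>"
  shows "inj_on (\<lambda>x. E x \<alpha> R (P_mS M k x)) M"
proof (rule inj_onI)
  fix x y assume xy: "x \<in> M" "y \<in> M" and eq: "E x \<alpha> R (P_mS M k x) = E y \<alpha> R (P_mS M k y)"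
  have "card {x, y} \<le> k + 1" and "k + 1 \<le> card M"
    using k M(2) by (auto simp: card_insert_if power2_eq_square)
  then obtain S where S: "{x, y} \<subseteq> S" "S \<subseteq> M" "card S = k + 1"
    using exists_subset_between[of "{x, y}" "k + 1" M] xy M(1) by auto
  note close = P_mS_Q_S_distr_close[OF M S(2,3) _ k \<alpha>]
  show "x = y"
    using S close by (intro error_free_codewords_distinct[OF assms(3) xy _ _ _ _ _ eq, where Q = "Q_S M k S"]) auto
qed

lemma prob_space_coins: "prob_space coins"
  unfolding coins_def by (intro prob_space_PiM prob_space_measure_pmf)

lemma expected_total_length_ge:
  fixes c :: "'a \<Rightarrow> (nat \<Rightarrow> bool) \<Rightarrow> bool list"
  assumes "finite M" and meas: "\<And>x. c x \<in> coins \<rightarrow>\<^sub>M count_space UNIV"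
    and inj: "\<And>R. inj_on (\<lambda>x. c x R) M" and "2 ^ (T + 1) \<le> card M"
  shows "ennreal ((real T - 1) * card M) \<le> (\<Sum>x\<in>M. \<integral>\<^sup>+ R. ennreal (real (length (c x R))) \<partial>coins)"
proof -
  interpret prob_space coins
    by (rule prob_space_coins)
  have pointwise: "ennreal ((real T - 1) * card M) \<le> (\<Sum>x\<in>M. ennreal (real (length (c x R))))" for R
  proof -
    have "T * card M \<le> (\<Sum>x\<in>M. length (c x R)) + card M"
      using sum_length_inj_on_ge[OF assms(1) inj[of R], of T] assms(4) by linarith
    then have "real (T * card M) \<le> real ((\<Sum>x\<in>M. length (c x R)) + card M)"
      by (rule of_nat_mono)
    then have "(real T - 1) * card M \<le> (\<Sum>x\<in>M. real (length (c x R)))"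
      by (simp add: algebra_simps)
    then have "ennreal ((real T - 1) * card M) \<le> ennreal (\<Sum>x\<in>M. real (length (c x R)))"
      by (rule ennreal_leI)
    also have "\<dots> = (\<Sum>x\<in>M. ennreal (real (length (c x R))))"
      by (rule sum_ennreal[symmetric]) simp
    finally show ?thesis .
  qed
  have "ennreal ((real T - 1) * card M) = (\<integral>\<^sup>+ R. ennreal ((real T - 1) * card M) \<partial>coins)"
    by (simp add: emeasure_space_1)
  also have "\<dots> \<le> (\<integral>\<^sup>+ R. (\<Sum>x\<in>M. ennreal (real (length (c x R)))) \<partial>coins)"
    using pointwise by (rule nn_integral_mono)
  also have "\<dots> = (\<Sum>x\<in>M. \<integral>\<^sup>+ R. ennreal (real (length (c x R))) \<partial>coins)"
    using meas by (intro nn_integral_sum) (auto intro: measurable_compose[OF _ measurable_count_space])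
  finally show ?thesis .
qed

lemma ex_ge_of_sum_ge_ennreal:
  fixes f :: "'a \<Rightarrow> ennreal"
  assumes "finite A" and "A \<noteq> {}" and "of_nat (card A) * c \<le> sum f A"
  shows "\<exists>x\<in>A. c \<le> f x"
proof -
  obtain m where m: "m \<in> A" "\<And>x. x \<in> A \<Longrightarrow> f x \<le> f m"
    using Max_in[of "f ` A"] Max_ge[of "f ` A"] assms(1,2) by fastforce
  have "of_nat (card A) * c \<le> of_nat (card A) * f m"
    using assms(3) sum_bounded_above[of A f "f m"] m(2) by (meson order.trans)
  then have "c \<le> f m"
    using assms(1,2) by (subst (asm) ennreal_mult_le_mult_iff) auto
  with m(1) show ?thesis ..
qed

lemma two_log_sub_le_mul:
  fixes l :: real
  assumes "16 \<le> l"
  shows "2 * l - 2 * log 2 l \<le> (1 - 1 / l) * (2 * l - 3)"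
proof -
  have "log 2 (16::real) = 4"
    using log_nat_power[of 2 2 4] by simp
  moreover have "log 2 16 \<le> log 2 l"
    using assms by simp
  moreover have "(1 - 1 / l) * (2 * l - 3) = 2 * l - 5 + 3 / l"
    using assms by (simp add: field_simps)
  moreover have "0 \<le> 3 / l"
    using assms by simp
  ultimately show ?thesis by linarith
qed

lemma exp_len_lower_bound:
  fixes M :: "'a set"
  assumes M: "finite M" "card M = k\<^sup>2 + 1"
    and meas: "\<forall>x \<alpha>' P. (\<lambda>R. E x \<alpha>' R P) \<in> coins \<rightarrow>\<^sub>M count_space UNIV"
    and ef: "error_free_scheme M E D" and k: "65536 \<le> k" and \<alpha>: "k * sqrt (log 2 k) \<le> \<alpha>"
  shows "\<exists>m\<in>M. ennreal (2 * log 2 k - 2 * log 2 (log 2 k)) \<le> exp_len M E \<alpha> (P_mS M k m)"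
proof -
  define l where "l = log 2 k"
  define T where "T = nat \<lfloor>2 * l\<rfloor> - 1"
  define I where "I x = (\<integral>\<^sup>+ R. ennreal (real (length (E x \<alpha> R (P_mS M k x)))) \<partial>coins)" for x
  have l: "16 \<le> l"
    using log_sqrt_large_bounds(1)[OF k] unfolding l_def .
  then have T: "real (T + 1) = \<lfloor>2 * l\<rfloor>"
    unfolding T_def by simp
  have "(2::real) ^ (T + 1) = 2 powr real (T + 1)"
    by (rule powr_realpow[symmetric]) simp
  also have "\<dots> \<le> 2 powr (2 * l)"
  proof (rule powr_mono)
    show "real (T + 1) \<le> 2 * l"
      using T of_int_floor_le[of "2 * l"] by linarith
  qed simp
  also have "\<dots> = 2 powr l * 2 powr l"
    by (simp only: mult_2 powr_add)
  also have "\<dots> = real k * real k"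
    using k by (simp add: l_def)
  finally have "real (2 ^ (T + 1)) \<le> real (card M)"
    using M(2) by (simp add: power2_eq_square)
  then have "2 ^ (T + 1) \<le> card M"
    by (simp only: of_nat_le_iff)
  then have total: "ennreal ((real T - 1) * card M) \<le> sum I M"
    unfolding I_def using M(1) meas codewords_inj_on[OF M ef k \<alpha>]
    by (intro expected_total_length_ge) auto
  have "of_nat (card M) * ennreal (2 * l - 3) = ennreal ((2 * l - 3) * card M)"
    using l by (simp add: ennreal_mult'' mult.commute flip: ennreal_of_nat_eq_real_of_nat)
  also have "\<dots> \<le> ennreal ((real T - 1) * card M)"
    using T by (intro ennreal_leI mult_right_mono) linarith+
  also note total
  finally have "of_nat (card M) * ennreal (2 * l - 3) \<le> sum I M" .
  moreover have "M \<noteq> {}"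
    using M(2) by auto
  ultimately obtain m where m: "m \<in> M" and Im: "ennreal (2 * l - 3) \<le> I m"
    using ex_ge_of_sum_ge_ennreal[OF M(1)] by blast
  have "ennreal (2 * l - 2 * log 2 l) \<le> ennreal (1 - 1 / l) * ennreal (2 * l - 3)"
    using two_log_sub_le_mul[OF l] l by (simp add: ennreal_mult[symmetric] ennreal_leI)
  also have "\<dots> \<le> ennreal (P_mS M k m m) * I m"
    using m Im by (simp add: P_mS_def l_def mult_left_mono)
  also have "\<dots> \<le> exp_len M E \<alpha> (P_mS M k m)"
    unfolding exp_len_def I_def using M(1) m by (intro member_le_sum) auto
  finally show ?thesis
    using m unfolding l_def by blast
qed

theorem mainTheorem4:
  shows "\<exists>\<alpha>0::nat. \<forall>\<alpha>\<ge>\<alpha>0. \<forall>(M::'a set) E D.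
           finite M \<and> card M = (kof \<alpha>)\<^sup>2 + 1 \<and>
           (\<forall>x \<alpha>' P. (\<lambda>R. E x \<alpha>' R P) \<in> measurable coins (count_space UNIV)) \<and>
           error_free_scheme M E D \<longrightarrow>
           (\<exists>(P, Q)\<in>family M \<alpha>.
              exp_len M E \<alpha> P \<ge> ennreal (2 * log 2 (real (kof \<alpha>)) - 2 * log 2 (log 2 (real (kof \<alpha>)))))"
proof (intro exI[of _ 262144] allI impI, elim conjE)
  fix \<alpha> :: nat and M :: "'a set" and E D
  assume \<alpha>: "262144 \<le> \<alpha>" and M: "finite M" "card M = (kof \<alpha>)\<^sup>2 + 1"
    and meas: "\<forall>x \<alpha>' P. (\<lambda>R. E x \<alpha>' R P) \<in> measurable coins (count_space UNIV)"
    and ef: "error_free_scheme M E D"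
  let ?k = "kof \<alpha>"
  obtain m where m: "m \<in> M"
    and bound: "ennreal (2 * log 2 ?k - 2 * log 2 (log 2 ?k)) \<le> exp_len M E \<alpha> (P_mS M ?k m)"
    using exp_len_lower_bound[OF M meas ef kof_large(2)[OF \<alpha>] kof_large(1)[OF \<alpha>]] by blast
  have "card {m} \<le> ?k + 1" and "?k + 1 \<le> card M"
    using M(2) by (auto simp: power2_eq_square)
  then obtain S where "m \<in> S" "S \<subseteq> M" "card S = ?k + 1"
    using exists_subset_between[of "{m}" "?k + 1" M] m M(1) by auto
  then have "(P_mS M ?k m, Q_S M ?k S) \<in> family M \<alpha>"
    unfolding family_def using m by blast
  with bound show "\<exists>(P, Q)\<in>family M \<alpha>. exp_len M E \<alpha> P \<ge> ennreal (2 * log 2 ?k - 2 * log 2 (log 2 ?k))"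
    by blast
qed

end
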